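(* Let $\mathcal N$ be an irreducible SDAN. Then every agent of $A$ is a party of every atom of $\mathcal N$, and for every atom $n\neq n_f$ and every outcome $r\in R_n$ there is an atom $n'$ such that $\mathcal X(n,a,r)=\{n'\}$ for every agent $a\in A$.
   Context: Fix a finite nonempty set $A$ of agents; each $a\in A$ has a nonempty set $Q_a$ of internal states, $Q_A=\prod_{a\in A}Q_a$. A transformer is a left-total relation on $Q_A$; for $S\subseteq A$ an $S$-transformer is one with $(q,q')\in\tau\Rightarrow q_a=q'_a$ for all $a\notin S$. An atom is $n=(P_n,R_n,\delta_n)$: $P_n\subseteq A$ nonempty (parties), $R_n$ finite nonempty (outcomes), $\delta_n$ assigns to each $r\in R_n$ a $P_n$-transformer $\langle n,r\rangle$. A negotiation is $\mathcal N=(N,n_0,n_f,\mathcal X)$ with $N$ a finite set of atoms, $n_0,n_f\in N$ (possibly equal), $T(N)=\{(n,a,r): n\in N,a\in P_n,r\in R_n\}$, $\mathcal X:T(N)\to 2^N$, such that every agent is a party of $n_0$ and of $n_f$, and $\mathcal X(n,a,r)=\emptyset$ iff $n=n_f$. Its graph has vertices $N$ and edges $(n,n')$ whenever $n'\in\mathcal X(n,a,r)$ for some $(n,a,r)$; $\mathcal N$ is acyclic if the graph has no cycle. A marking is $x:A\to 2^N$; initial $x_0(a)=\{n_0\}$, final $x_f(a)=\emptyset$. $x$ enables $n$ if $n\in x(a)$ for all $a\in P_n$; then for $r\in R_n$ the step $(n,r)$ leads to $x'$ with $x'(a)=\mathcal X(n,a,r)$ for $a\in P_n$, $x'(a)=x(a)$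 otherwise. A large step is a finite occurrence sequence from $x_0$ to $x_f$. $\mathcal N$ is sound if every atom is enabled at some reachable marking and every occurrence sequence from $x_0$ is a large step or can be extended to one. An agent $a$ is deterministic if for each $(n,a,r)\in T(N)$ with $n\ne n_f$, $\mathcal X(n,a,r)$ is a singleton; $\mathcal N$ is deterministic if all agents are deterministic. An SDAN is a sound, deterministic, acyclic negotiation. Merge rule. Guard: some atom $n$ has distinct outcomes $r_1,r_2$ with $\mathcal X(n,a,r_1)=\mathcal X(n,a,r_2)$ for all $a\in P_n$. Action: replace $r_1,r_2$ in $R_n$ by a fresh outcome $r_f$ with $\mathcal X(n,a,r_f)=\mathcal X(n,a,r_1)$ for $a\in P_n$ and $\langle n,r_f\rangle=\langle n,r_1\rangle\cup\langle n,r_2\rangle$. $(n,r)$ unconditionally enables $n'$ if $P_n\supseteq P_{n'}$ and $\mathcal X(n,a,r)=\{n'\}$ for all $a\in P_{n'}$. d-shortcut rule. Guard: atoms $n\neq n'$ and $r\in R_n$ such that $(n,r)$ unconditionally enables $n'$; $n'$ has at most one outcome; and if $n'\in\mathcal X(\tilde n,\tilde a,\tilde r)$ for at least one $(\tilde n,\tilde a,\tilde r)\in T(N)$ with $\tilde n\neq n$, then $\{n'\}=\mathcal X(\tilde n,\tilde a,\tilde r)$ for some $(\tilde n,\tilde a,\tilde r)\in T(N)$ with $\tilde n\ne n$. Action: (1) replace $R_n$ by $(R_n\setminus\{r\})\cup\{r'_f:r'\in R_{n'}\}$ with fresh names; (2) for $a\in P_{n'}$ set $\mathcal X(n,a,r'_f)=\mathcal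 X(n',a,r')$, for $a\in P_n\setminus P_{n'}$ set $\mathcal X(n,a,r'_f)=\mathcal X(n,a,r)$; (3) $\langle n,r'_f\rangle=\langle n,r\rangle\langle n',r'\rangle$ (relational composition); (4) if afterwards $n'\notin\mathcal X(\tilde n,\tilde a,\tilde r)$ for all $(\tilde n,\tilde a,\tilde r)\in T(N)$, remove $n'$. An SDAN is irreducible if neither the merge rule nor the d-shortcut rule can be applied to it. *)

theory Defs
  imports "HOL-Library.FuncSet"
begin

text \<open>A negotiation over agents of type 'a, local states of type 's, atoms of type 'n and
outcomes of type 'r. Global states Q_A are the extensional functions in Pi_E A Q.\<close>

record ('a, 's, 'n, 'r) negotiation =
  agents   :: "'a set"
  states   :: "'a \<Rightarrow> 's set"
  atoms    :: "'n set"
  init     :: "'n"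
  fin      :: "'n"
  parties  :: "'n \<Rightarrow> 'a set"
  outcomes :: "'n \<Rightarrow> 'r set"
  trf      :: "'n \<Rightarrow> 'r \<Rightarrow> (('a \<Rightarrow> 's) \<times> ('a \<Rightarrow> 's)) set"
  succ     :: "'n \<Rightarrow> 'a \<Rightarrow> 'r \<Rightarrow> 'n set"

definition gstates :: "('a, 's, 'n, 'r) negotiation \<Rightarrow> ('a \<Rightarrow> 's) set" where
  "gstates \<N> = PiE (agents \<N>) (states \<N>)"

definition is_transformer :: "('a, 's, 'n, 'r) negotiation \<Rightarrow> 'a set \<Rightarrow> (('a \<Rightarrow> 's) \<times> ('a \<Rightarrow> 's)) set \<Rightarrow> bool" where
  "is_transformer \<N> S \<tau> \<longleftrightarrow>
     \<tau> \<subseteq> gstates \<N> \<times> gstates \<N> \<and>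
     (\<forall>q\<in>gstates \<N>. \<exists>q'. (q, q') \<in> \<tau>) \<and>
     (\<forall>(q, q')\<in>\<tau>. \<forall>a\<in>agents \<N> - S. q a = q' a)"

definition Tset :: "('a, 's, 'n, 'r) negotiation \<Rightarrow> ('n \<times> 'a \<times> 'r) set" where
  "Tset \<N> = {(n, a, r). n \<in> atoms \<N> \<and> a \<in> parties \<N> n \<and> r \<in> outcomes \<N> n}"

definition wf_negotiation :: "('a, 's, 'n, 'r) negotiation \<Rightarrow> bool" where
  "wf_negotiation \<N> \<longleftrightarrow>
     finite (agents \<N>) \<and> agents \<N> \<noteq> {} \<and>
     (\<forall>a\<in>agents \<N>. states \<N> a \<noteq> {}) \<and>
     finite (atoms \<N>) \<and> init \<N> \<in> atoms \<N> \<and> fin \<N> \<in> atoms \<N> \<and>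
     (\<forall>n\<in>atoms \<N>. parties \<N> n \<noteq> {} \<and> parties \<N> n \<subseteq> agents \<N> \<and>
        finite (outcomes \<N> n) \<and> outcomes \<N> n \<noteq> {} \<and>
        (\<forall>r\<in>outcomes \<N> n. is_transformer \<N> (parties \<N> n) (trf \<N> n r))) \<and>
     agents \<N> \<subseteq> parties \<N> (init \<N>) \<and> agents \<N> \<subseteq> parties \<N> (fin \<N>) \<and>
     (\<forall>(n, a, r)\<in>Tset \<N>. succ \<N> n a r \<subseteq> atoms \<N> \<and>
        (succ \<N> n a r = {} \<longleftrightarrow> n = fin \<N>))"

definition graph :: "('a, 's, 'n, 'r) negotiation \<Rightarrow> ('n \<times> 'n) set" where
  "graph \<N> = {(n, n'). \<exists>a r. (n, a, r) \<in> Tset \<N> \<and> n' \<in> succ \<N> n a r}"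

definition is_acyclic :: "('a, 's, 'n, 'r) negotiation \<Rightarrow> bool" where
  "is_acyclic \<N> \<longleftrightarrow> acyclic (graph \<N>)"

text \<open>Markings. Agents outside A carry the empty set throughout.\<close>

definition init_marking :: "('a, 's, 'n, 'r) negotiation \<Rightarrow> 'a \<Rightarrow> 'n set" where
  "init_marking \<N> = (\<lambda>a. if a \<in> agents \<N> then {init \<N>} else {})"

definition fin_marking :: "'a \<Rightarrow> 'n set" where
  "fin_marking = (\<lambda>a. {})"

definition enables :: "('a, 's, 'n, 'r) negotiation \<Rightarrow> ('a \<Rightarrow> 'n set) \<Rightarrow> 'n \<Rightarrow> bool" where
  "enables \<N> x n \<longleftrightarrow> n \<in> atoms \<N> \<and> (\<forall>a\<in>parties \<N> n. n \<in> x a)"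

definition step :: "('a, 's, 'n, 'r) negotiation \<Rightarrow> ('a \<Rightarrow> 'n set) \<Rightarrow> 'n \<Rightarrow> 'r \<Rightarrow> ('a \<Rightarrow> 'n set) \<Rightarrow> bool" where
  "step \<N> x n r x' \<longleftrightarrow> enables \<N> x n \<and> r \<in> outcomes \<N> n \<and>
     x' = (\<lambda>a. if a \<in> parties \<N> n then succ \<N> n a r else x a)"

definition step_rel :: "('a, 's, 'n, 'r) negotiation \<Rightarrow> ('a \<Rightarrow> 'n set) \<Rightarrow> ('a \<Rightarrow> 'n set) \<Rightarrow> bool" where
  "step_rel \<N> x x' \<longleftrightarrow> (\<exists>n r. step \<N> x n r x')"

definition reach :: "('a, 's, 'n, 'r) negotiation \<Rightarrow> ('a \<Rightarrow> 'n set) \<Rightarrow> ('a \<Rightarrow> 'n set) \<Rightarrow> bool" where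
  "reach \<N> = (step_rel \<N>)\<^sup>*\<^sup>*"

definition sound :: "('a, 's, 'n, 'r) negotiation \<Rightarrow> bool" where
  "sound \<N> \<longleftrightarrow>
     (\<forall>n\<in>atoms \<N>. \<exists>x. reach \<N> (init_marking \<N>) x \<and> enables \<N> x n) \<and>
     (\<forall>x. reach \<N> (init_marking \<N>) x \<longrightarrow> reach \<N> x fin_marking)"

definition deterministic :: "('a, 's, 'n, 'r) negotiation \<Rightarrow> bool" where
  "deterministic \<N> \<longleftrightarrow>
     (\<forall>(n, a, r)\<in>Tset \<N>. n \<noteq> fin \<N> \<longrightarrow> (\<exists>n'. succ \<N> n a r = {n'}))"

definition SDAN :: "('a, 's, 'n, 'r) negotiation \<Rightarrow> bool" where
  "SDAN \<N> \<longleftrightarrow> wf_negotiation \<N> \<and> sound \<N> \<and> deterministic \<N> \<and> is_acyclic \<N>"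

definition merge_applicable :: "('a, 's, 'n, 'r) negotiation \<Rightarrow> bool" where
  "merge_applicable \<N> \<longleftrightarrow>
     (\<exists>n\<in>atoms \<N>. \<exists>r1\<in>outcomes \<N> n. \<exists>r2\<in>outcomes \<N> n. r1 \<noteq> r2 \<and>
        (\<forall>a\<in>parties \<N> n. succ \<N> n a r1 = succ \<N> n a r2))"

definition uncond_enables :: "('a, 's, 'n, 'r) negotiation \<Rightarrow> 'n \<Rightarrow> 'r \<Rightarrow> 'n \<Rightarrow> bool" where
  "uncond_enables \<N> n r n' \<longleftrightarrow>
     parties \<N> n' \<subseteq> parties \<N> n \<and> (\<forall>a\<in>parties \<N> n'. succ \<N> n a r = {n'})"

definition dshortcut_applicable :: "('a, 's, 'n, 'r) negotiation \<Rightarrow> bool" where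
  "dshortcut_applicable \<N> \<longleftrightarrow>
     (\<exists>n\<in>atoms \<N>. \<exists>n'\<in>atoms \<N>. \<exists>r\<in>outcomes \<N> n.
        n \<noteq> n' \<and> uncond_enables \<N> n r n' \<and> card (outcomes \<N> n') \<le> 1 \<and>
        ((\<exists>(n1, a1, r1)\<in>Tset \<N>. n1 \<noteq> n \<and> n' \<in> succ \<N> n1 a1 r1) \<longrightarrow>
         (\<exists>(n1, a1, r1)\<in>Tset \<N>. n1 \<noteq> n \<and> succ \<N> n1 a1 r1 = {n'})))"

definition irreducible :: "('a, 's, 'n, 'r) negotiation \<Rightarrow> bool" where
  "irreducible \<N> \<longleftrightarrow> \<not> merge_applicable \<N> \<and> \<not> dshortcut_applicable \<N>"

end

theory Submission
  imports Defs
begin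

text \<open>
  An irreducible SDAN consists of the single atom init = fin, so the claim about non-final
  atoms holds vacuously.

  Call an atom branching if it has two outcomes, and let f be a branching atom without
  branching successors. Since the merge rule does not apply, two outcomes s1, s2 of f send
  some party d to different atoms e1, e2. Let f occur with outcome s1, resp. s2, at some
  reachable marking. By well-founded induction along the graph, every atom an agent can
  reach after s1 it can also reach after s2: otherwise, the first atom e where this fails
  must have received each of its parties directly from (f, s1), since any other atom moving a
  party to e can be made to occur after s2 as well; then (f, s1) unconditionally enables the
  non-branching atom e and the d-shortcut rule applies. Hence d can move from e2 to e1 and
  from e1 to e2, contradicting acyclicity. So no atom branches, and then the atom enabled
  right after the initial one is unconditionally enabled by it unless init = fin. Finally,
  if init = fin, every atom enabled at a reachable marking lies on a path from fin, so by
  soundness fin is the only atom.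
\<close>

definition fire :: "('a, 's, 'n, 'r) negotiation \<Rightarrow> ('a \<Rightarrow> 'n set) \<Rightarrow> 'n \<Rightarrow> 'r \<Rightarrow> 'a \<Rightarrow> 'n set" where
  "fire N x n r = (\<lambda>a. if a \<in> parties N n then succ N n a r else x a)"

lemma step_iff_fire: "step N x n r x' \<longleftrightarrow> enables N x n \<and> r \<in> outcomes N n \<and> x' = fire N x n r"
  by (simp add: step_def fire_def)

lemma step_fire: "enables N x n \<Longrightarrow> r \<in> outcomes N n \<Longrightarrow> step N x n r (fire N x n r)"
  by (simp add: step_iff_fire)

lemma reach_fire: "enables N x n \<Longrightarrow> r \<in> outcomes N n \<Longrightarrow> reach N x (fire N x n r)"
  unfolding reach_def step_rel_def by (blast intro: step_fire)

lemma reach_trans: "reach N x y \<Longrightarrow> reach N y z \<Longrightarrow> reach N x z"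
  unfolding reach_def by simp

lemma succ_subset_graph_Image:
  "n \<in> atoms N \<Longrightarrow> a \<in> parties N n \<Longrightarrow> r \<in> outcomes N n \<Longrightarrow> succ N n a r \<subseteq> graph N `` {n}"
  unfolding graph_def Tset_def by blast

lemma reach_subset_rtrancl_Image: "reach N v y \<Longrightarrow> y a \<subseteq> (graph N)\<^sup>* `` v a"
  unfolding reach_def
proof (induction rule: rtranclp_induct)
  case (step y z)
  then obtain n r where n: "enables N y n" "r \<in> outcomes N n" "z = fire N y n r"
    unfolding step_rel_def step_iff_fire by blast
  show ?case
  proof (cases "a \<in> parties N n")
    case True
    have "n \<in> y a" using n(1) True unfolding enables_def by blast
    then have "n \<in> (graph N)\<^sup>* `` v a" using step.IH by blast
    moreover have "z a \<subseteq> graph N `` {n}"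
      using n True succ_subset_graph_Image[of n N a r] unfolding enables_def fire_def by simp
    ultimately show ?thesis by (auto intro: rtrancl_into_rtrancl)
  next
    case False
    then show ?thesis using n(3) step.IH by (simp add: fire_def)
  qed
qed blast

lemma reach_last_entry:
  assumes "reach N v y"
  shows "y b = v b \<or> (\<exists>y1 g r. reach N v y1 \<and> enables N y1 g \<and> b \<in> parties N g \<and>
                          r \<in> outcomes N g \<and> succ N g b r = y b)"
  using assms unfolding reach_def
proof (induction rule: rtranclp_induct)
  case (step y z)
  then obtain n r where n: "enables N y n" "r \<in> outcomes N n" "z = fire N y n r"
    unfolding step_rel_def step_iff_fire by blast
  show ?case
  proof (cases "b \<in> parties N n")
    case True
    then show ?thesis using n step.hyps(1) by (auto simp: fire_def)
  next
    case False
    then show ?thesis using n(3) step.IH by (simp add: fire_def)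
  qed
qed simp

lemma reach_fin_marking_enables:
  assumes "reach N y fin_marking" and "y a = {g}"
  shows "\<exists>z. reach N y z \<and> enables N z g \<and> a \<in> parties N g"
  using assms unfolding reach_def
proof (induction rule: converse_rtranclp_induct)
  case base
  then show ?case by (simp add: fin_marking_def)
next
  case (step y y')
  then obtain n r where n: "enables N y n" "r \<in> outcomes N n" "y' = fire N y n r"
    unfolding step_rel_def step_iff_fire by blast
  show ?case
  proof (cases "a \<in> parties N n")
    case True
    then have "n = g" using n(1) step.prems unfolding enables_def by auto
    then show ?thesis using n(1) True by blast
  next
    case False
    then have "y' a = {g}" using n(3) step.prems by (simp add: fire_def)
    then show ?thesis using step.IH step.hyps(1) by (meson converse_rtranclp_into_rtranclp)
  qed
qed

locale sdan =
  fixes N :: "('a, 's, 'n, 'r) negotiation"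
  assumes SDAN: "SDAN N"
begin

lemma well_formed: "wf_negotiation N"
  using SDAN by (simp add: SDAN_def)

lemma sound: "sound N"
  using SDAN by (simp add: SDAN_def)

lemma acyclic_graph: "acyclic (graph N)"
  using SDAN by (simp add: SDAN_def is_acyclic_def)

lemma finite_atoms: "finite (atoms N)"
  using well_formed by (simp add: wf_negotiation_def)

lemma init_in_atoms: "init N \<in> atoms N"
  using well_formed by (simp add: wf_negotiation_def)

lemma agents_nonempty: "agents N \<noteq> {}"
  using well_formed by (simp add: wf_negotiation_def)

lemma agents_subset_parties_init: "agents N \<subseteq> parties N (init N)"
  using well_formed by (simp add: wf_negotiation_def)

lemma agents_subset_parties_fin: "agents N \<subseteq> parties N (fin N)"
  using well_formed by (simp add: wf_negotiation_def)

lemma parties_nonempty: "n \<in> atoms N \<Longrightarrow> parties N n \<noteq> {}"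
  using well_formed by (simp add: wf_negotiation_def)

lemma parties_subset_agents: "n \<in> atoms N \<Longrightarrow> parties N n \<subseteq> agents N"
  using well_formed by (simp add: wf_negotiation_def)

lemma finite_outcomes: "n \<in> atoms N \<Longrightarrow> finite (outcomes N n)"
  using well_formed by (simp add: wf_negotiation_def)

lemma outcomes_nonempty: "n \<in> atoms N \<Longrightarrow> outcomes N n \<noteq> {}"
  using well_formed by (simp add: wf_negotiation_def)

lemma succ_wf:
  assumes "n \<in> atoms N" "a \<in> parties N n" "r \<in> outcomes N n"
  shows "succ N n a r \<subseteq> atoms N" and "succ N n a r = {} \<longleftrightarrow> n = fin N"
proof -
  have "\<forall>(n, a, r)\<in>Tset N. succ N n a r \<subseteq> atoms N \<and> (succ N n a r = {} \<longleftrightarrow> n = fin N)"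
    using well_formed unfolding wf_negotiation_def by (elim conjE)
  moreover have "(n, a, r) \<in> Tset N"
    using assms by (simp add: Tset_def)
  ultimately show "succ N n a r \<subseteq> atoms N" and "succ N n a r = {} \<longleftrightarrow> n = fin N"
    by auto
qed

lemma succ_singleton:
  assumes "n \<in> atoms N" "a \<in> parties N n" "r \<in> outcomes N n" "n \<noteq> fin N"
  obtains n' where "succ N n a r = {n'}" "n' \<in> atoms N"
proof -
  obtain n' where "succ N n a r = {n'}"
    using SDAN assms unfolding SDAN_def deterministic_def Tset_def by blast
  then show thesis using that succ_wf(1)[OF assms(1-3)] by blast
qed

lemma graph_subset: "graph N \<subseteq> atoms N \<times> atoms N"
  using succ_wf(1) unfolding graph_def Tset_def by blast

lemma finite_graph: "finite (graph N)"
  using graph_subset finite_atoms by (meson finite_SigmaI finite_subset)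

lemma graph_irrefl_trancl: "(n, n) \<notin> (graph N)\<^sup>+"
  using acyclic_graph by (simp add: acyclic_def)

abbreviation reachable :: "('a \<Rightarrow> 'n set) \<Rightarrow> bool" where
  "reachable \<equiv> reach N (init_marking N)"

lemma reachable_marking_cases: "reachable x \<Longrightarrow> x a = {} \<or> (\<exists>m\<in>atoms N. x a = {m})"
  unfolding reach_def
proof (induction rule: rtranclp_induct)
  case base
  then show ?case using init_in_atoms by (simp add: init_marking_def)
next
  case (step y z)
  then obtain n r where n: "enables N y n" "r \<in> outcomes N n" "z = fire N y n r"
    unfolding step_rel_def step_iff_fire by blast
  have "n \<in> atoms N" using n(1) by (simp add: enables_def)
  show ?case
  proof (cases "a \<in> parties N n")
    case True
    then have "z a = succ N n a r" using n(3) by (simp add: fire_def)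
    then show ?thesis
      using succ_wf(2)[OF \<open>n \<in> atoms N\<close> True n(2)] succ_singleton[OF \<open>n \<in> atoms N\<close> True n(2)]
      by (cases "n = fin N") auto
  next
    case False
    then show ?thesis using n(3) step.IH by (simp add: fire_def)
  qed
qed

lemma reachable_enables: "reachable x \<Longrightarrow> enables N x n \<Longrightarrow> a \<in> parties N n \<Longrightarrow> x a = {n}"
  using reachable_marking_cases[of x a] unfolding enables_def by auto

lemma reachable_eventually_enables:
  assumes "reachable y" and "y a = {g}"
  shows "\<exists>z. reach N y z \<and> enables N z g \<and> a \<in> parties N g"
proof -
  have "reach N y fin_marking" using sound assms(1) unfolding sound_def by blast
  then show ?thesis using assms(2) by (rule reach_fin_marking_enables)
qed

definition visits :: "('a \<Rightarrow> 'n set) \<Rightarrow> 'a \<Rightarrow> 'n \<Rightarrow> bool" where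
  "visits v a e \<longleftrightarrow> (\<exists>y. reach N v y \<and> y a = {e})"

lemma visits_self: "v a = {e} \<Longrightarrow> visits v a e"
  unfolding visits_def reach_def by blast

lemma visits_enables:
  assumes "reachable v" and "visits v a e"
  shows "\<exists>z. reach N v z \<and> enables N z e \<and> a \<in> parties N e"
proof -
  obtain y where y: "reach N v y" "y a = {e}" using assms(2) unfolding visits_def by blast
  moreover have "reachable y" using assms(1) y(1) by (rule reach_trans)
  ultimately show ?thesis using reachable_eventually_enables[of y a e] reach_trans by blast
qed

lemma visits_party:
  assumes "reachable v" and "visits v b e" and "a \<in> parties N e"
  shows "visits v a e"
proof -
  obtain z where z: "reach N v z" "enables N z e" using visits_enables[OF assms(1,2)] by blast
  have "reachable z" using assms(1) z(1) by (rule reach_trans)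
  then have "z a = {e}" using z(2) assms(3) by (rule reachable_enables)
  then show ?thesis using z(1) unfolding visits_def by blast
qed

lemma visits_rtrancl_Image: "visits v a e \<Longrightarrow> e \<in> (graph N)\<^sup>* `` v a"
proof -
  assume "visits v a e"
  then obtain y where "reach N v y" "y a = {e}" unfolding visits_def by blast
  then show ?thesis using reach_subset_rtrancl_Image[of N v y a] by simp
qed

lemma succ_eq_singleton_if_mem:
  assumes "n \<in> atoms N" "a \<in> parties N n" "r \<in> outcomes N n" "e \<in> succ N n a r"
  shows "succ N n a r = {e}"
proof -
  have "n \<noteq> fin N" using succ_wf(2)[OF assms(1-3)] assms(4) by auto
  then obtain n' where "succ N n a r = {n'}" using succ_singleton[OF assms(1-3)] by blast
  then show ?thesis using assms(4) by simp
qed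

lemma uncond_enables_graph:
  assumes "f \<in> atoms N" "s \<in> outcomes N f" "e \<in> atoms N" "uncond_enables N f s e"
  shows "(f, e) \<in> graph N"
proof -
  obtain b where "b \<in> parties N e" using parties_nonempty[OF assms(3)] by blast
  then have "b \<in> parties N f" "succ N f b s = {e}"
    using assms(4) unfolding uncond_enables_def by auto
  then show ?thesis using assms(1,2) unfolding graph_def Tset_def by blast
qed

text \<open>In a deterministic negotiation the last guard of the d-shortcut rule holds automatically.\<close>

lemma dshortcut_applicableI:
  assumes "f \<in> atoms N" "s \<in> outcomes N f" "e \<in> atoms N" "uncond_enables N f s e"
    and "card (outcomes N e) \<le> 1"
  shows "dshortcut_applicable N"
proof -
  have "f \<noteq> e"
    using uncond_enables_graph[OF assms(1-4)] graph_irrefl_trancl[of f] by auto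
  moreover have "\<exists>(n1, a1, r1)\<in>Tset N. n1 \<noteq> f \<and> succ N n1 a1 r1 = {e}"
    if "\<exists>(n1, a1, r1)\<in>Tset N. n1 \<noteq> f \<and> e \<in> succ N n1 a1 r1"
  proof -
    from that obtain n1 a1 r1 where t: "(n1, a1, r1) \<in> Tset N" "n1 \<noteq> f" "e \<in> succ N n1 a1 r1"
      by blast
    then have "succ N n1 a1 r1 = {e}"
      using succ_eq_singleton_if_mem[of n1 a1 r1 e] unfolding Tset_def by simp
    with t(1,2) show ?thesis by blast
  qed
  ultimately show ?thesis
    using assms unfolding dshortcut_applicable_def by blast
qed

lemma wf_graph: "wf (graph N)"
  using finite_acyclic_wf[OF finite_graph acyclic_graph] .

context
  fixes w f s1 s2
  assumes no_shortcut: "\<not> dshortcut_applicable N"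
    and reachable_w: "reachable w" and enables_f: "enables N w f"
    and s1: "s1 \<in> outcomes N f" and s2: "s2 \<in> outcomes N f"
    and successor_card_outcomes: "\<And>e. (f, e) \<in> graph N \<Longrightarrow> card (outcomes N e) \<le> 1"
begin

lemma reachable_fire_f: "s \<in> outcomes N f \<Longrightarrow> reachable (fire N w f s)"
  using reach_trans[OF reachable_w reach_fire[OF enables_f]] .

lemma entry_through_f:
  assumes IH: "\<And>g. (g, e) \<in> graph N \<Longrightarrow> visits (fire N w f s1) b g \<Longrightarrow> visits (fire N w f s2) b g"
    and not_visits: "\<not> visits (fire N w f s2) b e"
    and z: "reach N (fire N w f s1) z" "z b = {e}"
  shows "b \<in> parties N f \<and> succ N f b s1 = {e}"
  using reach_last_entry[OF z(1), of b]
proof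
  assume "z b = fire N w f s1 b"
  moreover have "b \<in> parties N f"
  proof (rule ccontr)
    assume "b \<notin> parties N f"
    then have "fire N w f s2 b = z b" using \<open>z b = fire N w f s1 b\<close> by (simp add: fire_def)
    then show False using not_visits visits_self z(2) by metis
  qed
  ultimately show ?thesis using z(2) by (simp add: fire_def)
next
  assume "\<exists>y1 g r. reach N (fire N w f s1) y1 \<and> enables N y1 g \<and> b \<in> parties N g \<and>
            r \<in> outcomes N g \<and> succ N g b r = z b"
  then obtain y1 g r where y1: "reach N (fire N w f s1) y1" "enables N y1 g" "b \<in> parties N g"
    "r \<in> outcomes N g" "succ N g b r = {e}"
    using z(2) by auto
  have "g \<in> atoms N" using y1(2) by (simp add: enables_def)
  have "reachable y1" using reach_trans[OF reachable_fire_f[OF s1] y1(1)] .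
  then have "y1 b = {g}" using y1(2,3) by (rule reachable_enables)
  then have "visits (fire N w f s1) b g" using y1(1) unfolding visits_def by blast
  moreover have "(g, e) \<in> graph N"
    using succ_subset_graph_Image[OF \<open>g \<in> atoms N\<close> y1(3,4)] y1(5) by blast
  ultimately have "visits (fire N w f s2) b g" using IH by blast
  then obtain z2 where z2: "reach N (fire N w f s2) z2" "enables N z2 g"
    using visits_enables[OF reachable_fire_f[OF s2]] by blast
  have "reach N (fire N w f s2) (fire N z2 g r)"
    using reach_trans[OF z2(1) reach_fire[OF z2(2) y1(4)]] .
  moreover have "fire N z2 g r b = {e}" using y1(3,5) by (simp add: fire_def)
  ultimately show ?thesis using not_visits unfolding visits_def by blast
qed

lemma visits_transfer: "visits (fire N w f s1) a e \<Longrightarrow> visits (fire N w f s2) a e"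
proof (induction e arbitrary: a rule: wf_induct_rule[OF wf_graph, case_names less])
  case (less e)
  show ?case
  proof (rule ccontr)
    assume not_visits: "\<not> visits (fire N w f s2) a e"
    obtain z where z: "reach N (fire N w f s1) z" "enables N z e" "a \<in> parties N e"
      using visits_enables[OF reachable_fire_f[OF s1] less.prems] by blast
    have "e \<in> atoms N" using z(2) by (simp add: enables_def)
    have "reachable z" using reach_trans[OF reachable_fire_f[OF s1] z(1)] .
    have entry: "b \<in> parties N f \<and> succ N f b s1 = {e}" if "b \<in> parties N e" for b
    proof (rule entry_through_f)
      show "\<And>g. (g, e) \<in> graph N \<Longrightarrow> visits (fire N w f s1) b g \<Longrightarrow> visits (fire N w f s2) b g"
        using less.IH by blast
      show "\<not> visits (fire N w f s2) b e"
        using not_visits visits_party[OF reachable_fire_f[OF s2] _ z(3)] by blast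
      show "reach N (fire N w f s1) z" by (fact z(1))
      show "z b = {e}" using \<open>reachable z\<close> z(2) that by (rule reachable_enables)
    qed
    have f_in_atoms: "f \<in> atoms N" using enables_f by (simp add: enables_def)
    have "uncond_enables N f s1 e"
      using entry unfolding uncond_enables_def by blast
    moreover from this have "card (outcomes N e) \<le> 1"
      by (intro successor_card_outcomes uncond_enables_graph[OF f_in_atoms s1 \<open>e \<in> atoms N\<close>])
    ultimately show False
      using no_shortcut dshortcut_applicableI[OF f_in_atoms s1 \<open>e \<in> atoms N\<close>] by blast
  qed
qed

end

lemma succ_eq_if_successors_card_outcomes_le_1:
  assumes no_shortcut: "\<not> dshortcut_applicable N" and f: "f \<in> atoms N"
    and successors: "\<And>e. (f, e) \<in> graph N \<Longrightarrow> card (outcomes N e) \<le> 1"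
    and s1: "s1 \<in> outcomes N f" and s2: "s2 \<in> outcomes N f" and d: "d \<in> parties N f"
  shows "succ N f d s1 = succ N f d s2"
proof (cases "f = fin N")
  case True
  then show ?thesis using succ_wf(2)[OF f d s1] succ_wf(2)[OF f d s2] by simp
next
  case False
  obtain e1 where e1: "succ N f d s1 = {e1}" using succ_singleton[OF f d s1 False] by blast
  obtain e2 where e2: "succ N f d s2 = {e2}" using succ_singleton[OF f d s2 False] by blast
  obtain w where w: "reachable w" "enables N w f" using sound f unfolding sound_def by blast
  have "visits (fire N w f s2) d e1"
    using visits_transfer[OF no_shortcut w s1 s2 successors] visits_self d e1
    by (simp add: fire_def)
  then have "(e2, e1) \<in> (graph N)\<^sup>*"
    using visits_rtrancl_Image d e2 by (fastforce simp: fire_def)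
  moreover have "visits (fire N w f s1) d e2"
    using visits_transfer[OF no_shortcut w s2 s1 successors] visits_self d e2
    by (simp add: fire_def)
  then have "(e1, e2) \<in> (graph N)\<^sup>*"
    using visits_rtrancl_Image d e1 by (fastforce simp: fire_def)
  ultimately have "e1 = e2"
    using graph_irrefl_trancl[of e1] rtrancl_eq_or_trancl[of e1 e2] trancl_rtrancl_trancl[of e1 e2]
    by blast
  then show ?thesis using e1 e2 by simp
qed

lemma irreducible_card_outcomes_le_1:
  assumes irreducible: "irreducible N" and n: "n \<in> atoms N"
  shows "card (outcomes N n) \<le> 1"
proof (rule ccontr)
  let ?branching = "{g \<in> atoms N. \<not> card (outcomes N g) \<le> 1}"
  assume "\<not> card (outcomes N n) \<le> 1"
  then have "n \<in> ?branching" using n by blast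
  have "wf ((graph N)\<inverse>)" using finite_acyclic_wf_converse[OF finite_graph acyclic_graph] .
  then obtain f where f: "f \<in> ?branching"
    and maximal: "\<And>e. (e, f) \<in> (graph N)\<inverse> \<Longrightarrow> e \<notin> ?branching"
    using wfE_min[OF _ \<open>n \<in> ?branching\<close>] by blast
  have f_in_atoms: "f \<in> atoms N" using f by blast
  have successors: "card (outcomes N e) \<le> 1" if "(f, e) \<in> graph N" for e
  proof -
    have "e \<in> atoms N" using that graph_subset by blast
    then show ?thesis using maximal[of e] that by simp
  qed
  obtain s1 s2 where s: "s1 \<in> outcomes N f" "s2 \<in> outcomes N f" "s1 \<noteq> s2"
    using f card_le_Suc0_iff_eq[OF finite_outcomes[OF f_in_atoms]] by auto
  have no_shortcut: "\<not> dshortcut_applicable N"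
    using irreducible unfolding irreducible_def by blast
  have "\<forall>d\<in>parties N f. succ N f d s1 = succ N f d s2"
    using succ_eq_if_successors_card_outcomes_le_1[OF no_shortcut f_in_atoms successors s(1,2)]
    by blast
  then have "merge_applicable N"
    using f_in_atoms s unfolding merge_applicable_def by blast
  then show False using irreducible unfolding irreducible_def by blast
qed

lemma init_marking_enables_init: "enables N (init_marking N) (init N)"
  using init_in_atoms parties_subset_agents[OF init_in_atoms]
  unfolding enables_def init_marking_def by auto

text \<open>The atom enabled right after init has occurred is unconditionally enabled by it, because
  every agent takes part in init.\<close>

lemma irreducible_init_eq_fin:
  assumes irreducible: "irreducible N"
  shows "init N = fin N"
proof (rule ccontr)
  assume not_fin: "init N \<noteq> fin N"
  obtain r where r: "r \<in> outcomes N (init N)" using outcomes_nonempty[OF init_in_atoms] by blast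
  define v where "v = fire N (init_marking N) (init N) r"
  have "reachable v" unfolding v_def using init_marking_enables_init r by (rule reach_fire)
  obtain a where "a \<in> agents N" using agents_nonempty by blast
  then have "v a \<noteq> {}"
    using agents_subset_parties_init succ_wf(2)[OF init_in_atoms _ r] not_fin
    unfolding v_def fire_def by auto
  then have "v \<noteq> fin_marking" unfolding fin_marking_def by auto
  moreover have "reach N v fin_marking" using sound \<open>reachable v\<close> unfolding sound_def by blast
  ultimately obtain v' where "step_rel N v v'"
    unfolding reach_def by (metis converse_rtranclpE)
  then obtain e where e: "enables N v e" unfolding step_rel_def step_iff_fire by blast
  have "e \<in> atoms N" using e by (simp add: enables_def)
  have "uncond_enables N (init N) r e"
    unfolding uncond_enables_def
  proof (intro conjI ballI subsetI)
    fix b assume "b \<in> parties N e"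
    then have b: "b \<in> parties N (init N)"
      using parties_subset_agents[OF \<open>e \<in> atoms N\<close>] agents_subset_parties_init by blast
    then show "b \<in> parties N (init N)" .
    have "e \<in> succ N (init N) b r" using e \<open>b \<in> parties N e\<close> b
      unfolding enables_def v_def fire_def by auto
    then show "succ N (init N) b r = {e}" by (rule succ_eq_singleton_if_mem[OF init_in_atoms b r])
  qed
  then have "dshortcut_applicable N"
    using dshortcut_applicableI[OF init_in_atoms r \<open>e \<in> atoms N\<close>]
      irreducible_card_outcomes_le_1[OF irreducible \<open>e \<in> atoms N\<close>] by blast
  then show False using irreducible unfolding irreducible_def by blast
qed

lemma atoms_eq_fin_if_init_eq_fin:
  assumes "init N = fin N" and n: "n \<in> atoms N"
  shows "n = fin N"
proof -
  obtain x where x: "reachable x" "enables N x n" using sound n unfolding sound_def by blast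
  obtain a where a: "a \<in> parties N n" using parties_nonempty[OF n] by blast
  then have "a \<in> agents N" using parties_subset_agents[OF n] by blast
  then have "n \<in> (graph N)\<^sup>* `` {fin N}"
    using reach_subset_rtrancl_Image[OF x(1), of a] x(2) a assms(1)
    unfolding enables_def init_marking_def by auto
  moreover have "(fin N, m) \<notin> graph N" for m
    using succ_wf(2) unfolding graph_def Tset_def by auto
  ultimately show ?thesis by (auto elim: converse_rtranclE)
qed

end

theorem lemma2:
  fixes \<N> :: "('a, 's, 'n, 'r) negotiation"
  assumes "SDAN \<N>" and "irreducible \<N>"
  shows "(\<forall>n\<in>atoms \<N>. agents \<N> \<subseteq> parties \<N> n) \<and>
         (\<forall>n\<in>atoms \<N>. n \<noteq> fin \<N> \<longrightarrow>
            (\<forall>r\<in>outcomes \<N> n. \<exists>n'\<in>atoms \<N>. \<forall>a\<in>agents \<N>. succ \<N> n a r = {n'}))"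
proof -
  interpret sdan \<N> using assms(1) by (rule sdan.intro)
  have "n = fin \<N>" if "n \<in> atoms \<N>" for n
    using atoms_eq_fin_if_init_eq_fin[OF irreducible_init_eq_fin[OF assms(2)] that] .
  then show ?thesis using agents_subset_parties_fin by auto
qed

end
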